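(* Let $c,d\in P$ with $c<d$. Then $(P;{\rm Low})$ has a primitive positive interpretation in $(P;{\rm Cycl},c,d)$.
   Context: $(P;\leq)$ is the random partial order (Fraïssé limit of all finite partial orders); $x<y$ means $x\leq y\wedge x\ne y$; $x\bot y$ means incomparable; $z\bot xy$ abbreviates $z\bot x\wedge z\bot y$. ${\rm Low}(x,y,z):=(x<y\wedge z\bot xy)\vee(x<z\wedge y\bot xz)$; ${\rm Cycl}(x,y,z):=(x<y\wedge y<z)\vee(y<z\wedge z<x)\vee(z<x\wedge x<y)\vee(x<y\wedge z\bot xy)\vee(y<z\wedge x\bot yz)\vee(z<x\wedge y\bot zx)$. $(P;{\rm Cycl},c,d)$ is the expansion by constants $c,d$. A structure $\Delta$ (domain $D$) has a primitive positive interpretation in $\Gamma$ if there are $n\geq1$ and a surjective partial map $I:P^n\to D$ whose domain, the preimage of equality on $D$, and the preimages of the relations of $\Delta$ are definable in $\Gamma$ by primitive positive formulas ($\exists\bar y$ (conjunction of atomic formulas)). *)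

theory Defs
  imports "HOL-Library.Countable_Set"
begin

definition is_po :: "('a \<Rightarrow> 'a \<Rightarrow> bool) \<Rightarrow> bool" where
  "is_po le \<longleftrightarrow> (\<forall>x. le x x) \<and> (\<forall>x y. le x y \<and> le y x \<longrightarrow> x = y)
     \<and> (\<forall>x y z. le x y \<and> le y z \<longrightarrow> le x z)"

definition is_po_on :: "'b set \<Rightarrow> ('b \<Rightarrow> 'b \<Rightarrow> bool) \<Rightarrow> bool" where
  "is_po_on S r \<longleftrightarrow> (\<forall>x\<in>S. r x x) \<and> (\<forall>x\<in>S. \<forall>y\<in>S. r x y \<and> r y x \<longrightarrow> x = y)
     \<and> (\<forall>x\<in>S. \<forall>y\<in>S. \<forall>z\<in>S. r x y \<and> r y z \<longrightarrow> r x z)"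

text \<open>The random partial order: the Fraisse limit of the class of all finite partial orders,
  i.e. a countable homogeneous partial order into which every finite partial order embeds
  (every finite partial order is isomorphic to one on a finite set of naturals).\<close>
definition random_po :: "('a \<Rightarrow> 'a \<Rightarrow> bool) \<Rightarrow> bool" where
  "random_po le \<longleftrightarrow> is_po le \<and> countable (UNIV :: 'a set)
   \<and> (\<forall>A f. finite A \<and> inj_on f A \<and> (\<forall>x\<in>A. \<forall>y\<in>A. le x y \<longleftrightarrow> le (f x) (f y))
        \<longrightarrow> (\<exists>g. bij g \<and> (\<forall>x y. le x y \<longleftrightarrow> le (g x) (g y)) \<and> (\<forall>x\<in>A. g x = f x)))
   \<and> (\<forall>(S :: nat set) r. finite S \<and> is_po_on S r
        \<longrightarrow> (\<exists>f :: nat \<Rightarrow> 'a. inj_on f S \<and> (\<forall>x\<in>S. \<forall>y\<in>S. r x y \<longleftrightarrow> le (f x) (f y))))"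

definition lt :: "('a \<Rightarrow> 'a \<Rightarrow> bool) \<Rightarrow> 'a \<Rightarrow> 'a \<Rightarrow> bool" where
  "lt le x y \<longleftrightarrow> le x y \<and> x \<noteq> y"

definition incomp :: "('a \<Rightarrow> 'a \<Rightarrow> bool) \<Rightarrow> 'a \<Rightarrow> 'a \<Rightarrow> bool" where
  "incomp le x y \<longleftrightarrow> \<not> le x y \<and> \<not> le y x"

definition Low :: "('a \<Rightarrow> 'a \<Rightarrow> bool) \<Rightarrow> 'a \<Rightarrow> 'a \<Rightarrow> 'a \<Rightarrow> bool" where
  "Low le x y z \<longleftrightarrow>
     (lt le x y \<and> incomp le z x \<and> incomp le z y) \<or> (lt le x z \<and> incomp le y x \<and> incomp le y z)"

definition Cycl :: "('a \<Rightarrow> 'a \<Rightarrow> bool) \<Rightarrow> 'a \<Rightarrow> 'a \<Rightarrow> 'a \<Rightarrow> bool" where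
  "Cycl le x y z \<longleftrightarrow>
     (lt le x y \<and> lt le y z) \<or> (lt le y z \<and> lt le z x) \<or> (lt le z x \<and> lt le x y)
   \<or> (lt le x y \<and> incomp le z x \<and> incomp le z y)
   \<or> (lt le y z \<and> incomp le x y \<and> incomp le x z)
   \<or> (lt le z x \<and> incomp le y z \<and> incomp le y x)"

datatype pp_term = Var nat | CstC | CstD

datatype pp_atom = AR pp_term pp_term pp_term | AEq pp_term pp_term

fun term_vars :: "pp_term \<Rightarrow> nat set" where
  "term_vars (Var i) = {i}" | "term_vars CstC = {}" | "term_vars CstD = {}"

fun atom_vars :: "pp_atom \<Rightarrow> nat set" where
  "atom_vars (AR s t u) = term_vars s \<union> term_vars t \<union> term_vars u"
| "atom_vars (AEq s t) = term_vars s \<union> term_vars t"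

fun eval_term :: "'a \<Rightarrow> 'a \<Rightarrow> 'a list \<Rightarrow> pp_term \<Rightarrow> 'a" where
  "eval_term c d v (Var i) = v ! i"
| "eval_term c d v CstC = c"
| "eval_term c d v CstD = d"

fun holds_atom :: "('a \<Rightarrow> 'a \<Rightarrow> 'a \<Rightarrow> bool) \<Rightarrow> 'a \<Rightarrow> 'a \<Rightarrow> 'a list \<Rightarrow> pp_atom \<Rightarrow> bool" where
  "holds_atom R c d v (AR s t u) = R (eval_term c d v s) (eval_term c d v t) (eval_term c d v u)"
| "holds_atom R c d v (AEq s t) = (eval_term c d v s = eval_term c d v t)"

text \<open>A k-ary relation (set of k-tuples, as lists of length k) is pp-definable in
  (UNIV; R, c, d): it is defined by \<exists>y_1..y_m. (conjunction of atoms) where the free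
  variables are 0..k-1 and the quantified ones are k..k+m-1.\<close>
definition pp_definable :: "('a \<Rightarrow> 'a \<Rightarrow> 'a \<Rightarrow> bool) \<Rightarrow> 'a \<Rightarrow> 'a \<Rightarrow> nat \<Rightarrow> 'a list set \<Rightarrow> bool" where
  "pp_definable R c d k Rel \<longleftrightarrow> Rel \<subseteq> {xs. length xs = k} \<and>
     (\<exists>(m::nat) (atoms :: pp_atom list).
        (\<forall>a\<in>set atoms. \<forall>i\<in>atom_vars a. i < k + m) \<and>
        (\<forall>xs. length xs = k \<longrightarrow>
           (xs \<in> Rel \<longleftrightarrow> (\<exists>ys. length ys = m \<and> (\<forall>a\<in>set atoms. holds_atom R c d (xs @ ys) a)))))"

definition pp_interpretable ::
  "('a \<Rightarrow> 'a \<Rightarrow> 'a \<Rightarrow> bool) \<Rightarrow> 'a \<Rightarrow> 'a \<Rightarrow> ('b \<Rightarrow> 'b \<Rightarrow> 'b \<Rightarrow> bool) \<Rightarrow> bool" where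
  "pp_interpretable R c d S \<longleftrightarrow>
     (\<exists>(n::nat) (I :: 'a list \<Rightarrow> 'b option). n \<ge> 1 \<and>
        (let Dom = {xs. length xs = n \<and> I xs \<noteq> None} in
          (\<forall>b. \<exists>xs\<in>Dom. I xs = Some b) \<and>
          pp_definable R c d n Dom \<and>
          pp_definable R c d (2 * n)
            {xs @ ys | xs ys. xs \<in> Dom \<and> ys \<in> Dom \<and> I xs = I ys} \<and>
          pp_definable R c d (3 * n)
            {xs @ ys @ zs | xs ys zs. xs \<in> Dom \<and> ys \<in> Dom \<and> zs \<in> Dom \<and>
               S (the (I xs)) (the (I ys)) (the (I zs))}))"

end

theory Submission
  imports Defs
begin

text \<open>
  For c < d, the formula Cycl(d, c, x) says exactly c < x < d, and a back-and-forth argument,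
  driven by the one-point extension property of the random partial order, shows that the open
  interval (c, d) is order-isomorphic to the whole order. It therefore suffices to pp-define Low
  on the interval, giving a one-dimensional interpretation with the interval as domain. Inside the
  interval, x < y is Cycl(c, x, y); incomparability of x and y is witnessed by three auxiliary
  points tied to x, y, c, d by ten Cycl atoms; and Low(x, y, z) is witnessed by three further
  points of the interval in a fixed configuration of Cycl, < and incomparability. All required
  witnesses exist because the random partial order realizes every cut of every finite subset.
\<close>

lemma is_po_refl: "is_po le \<Longrightarrow> le x x"
  and is_po_antisym: "is_po le \<Longrightarrow> le x y \<Longrightarrow> le y x \<Longrightarrow> x = y"
  and is_po_trans: "is_po le \<Longrightarrow> le x y \<Longrightarrow> le y z \<Longrightarrow> le x z"
  unfolding is_po_def by blast+

lemma lt_iff_le_not_le: "is_po le \<Longrightarrow> lt le x y \<longleftrightarrow> le x y \<and> \<not> le y x"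
  unfolding lt_def using is_po_antisym is_po_refl by metis

lemma random_po_is_po: "random_po le \<Longrightarrow> is_po le"
  and random_po_countable: "random_po (le :: 'a \<Rightarrow> 'a \<Rightarrow> bool) \<Longrightarrow> countable (UNIV :: 'a set)"
  unfolding random_po_def by simp_all

lemma random_po_homogeneous:
  assumes "random_po le" "finite A" "inj_on f A" "\<forall>x\<in>A. \<forall>y\<in>A. le x y \<longleftrightarrow> le (f x) (f y)"
  shows "\<exists>g. bij g \<and> (\<forall>x y. le x y \<longleftrightarrow> le (g x) (g y)) \<and> (\<forall>x\<in>A. g x = f x)"
  using assms unfolding random_po_def by (elim conjE allE[of _ A] allE[of _ f]) simp

lemma random_po_universal:
  assumes "random_po le" "finite (S :: nat set)" "is_po_on S r"
  shows "\<exists>f. inj_on f S \<and> (\<forall>x\<in>S. \<forall>y\<in>S. r x y \<longleftrightarrow> le (f x) (f y))"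
  using assms unfolding random_po_def by (elim conjE allE[of _ S] allE[of _ r]) simp

section \<open>One-point extensions of the random partial order\<close>

definition is_cut :: "('a \<Rightarrow> 'a \<Rightarrow> bool) \<Rightarrow> 'a set \<Rightarrow> 'a set \<Rightarrow> 'a set \<Rightarrow> bool" where
  "is_cut le F L H \<longleftrightarrow> L \<subseteq> F \<and> H \<subseteq> F \<and> L \<inter> H = {}
     \<and> (\<forall>a\<in>F. \<forall>l\<in>L. le a l \<longrightarrow> a \<in> L) \<and> (\<forall>a\<in>F. \<forall>h\<in>H. le h a \<longrightarrow> a \<in> H)
     \<and> (\<forall>l\<in>L. \<forall>h\<in>H. le l h)"

definition realizes_cut :: "('a \<Rightarrow> 'a \<Rightarrow> bool) \<Rightarrow> 'a set \<Rightarrow> 'a set \<Rightarrow> 'a set \<Rightarrow> 'a \<Rightarrow> bool" where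
  "realizes_cut le F L H w \<longleftrightarrow> (\<forall>a\<in>F. le a w \<longleftrightarrow> a \<in> L) \<and> (\<forall>a\<in>F. le w a \<longleftrightarrow> a \<in> H)"

text \<open>Indices below length xs stand for the entries of xs; the index length xs is a new point
  lying above exactly L and below exactly H.\<close>
definition one_point_extension :: "('a \<Rightarrow> 'a \<Rightarrow> bool) \<Rightarrow> 'a list \<Rightarrow> 'a set \<Rightarrow> 'a set \<Rightarrow> nat \<Rightarrow> nat \<Rightarrow> bool" where
  "one_point_extension le xs L H i j \<longleftrightarrow>
     (if i < length xs \<and> j < length xs then le (xs ! i) (xs ! j)
      else if i < length xs then xs ! i \<in> L
      else if j < length xs then xs ! j \<in> H
      else True)"

lemma is_po_on_one_point_extension:
  assumes po: "is_po le" and cut: "is_cut le (set xs) L H" and dist: "distinct xs"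
  shows "is_po_on {..length xs} (one_point_extension le xs L H)"
  unfolding is_po_on_def
proof (intro conjI ballI impI)
  fix i assume "i \<in> {..length xs}"
  then show "one_point_extension le xs L H i i"
    by (simp add: one_point_extension_def is_po_refl[OF po])
next
  fix i j assume ij: "i \<in> {..length xs}" "j \<in> {..length xs}"
    "one_point_extension le xs L H i j \<and> one_point_extension le xs L H j i"
  have disj: "a \<in> L \<Longrightarrow> a \<notin> H" for a using cut unfolding is_cut_def by blast
  show "i = j"
  proof (cases "i < length xs"; cases "j < length xs")
    assume "i < length xs" "j < length xs"
    moreover from this have "xs ! i = xs ! j"
      using ij is_po_antisym[OF po] by (simp add: one_point_extension_def)
    ultimately show ?thesis using dist nth_eq_iff_index_eq by blast
  qed (use ij disj in \<open>auto simp: one_point_extension_def\<close>)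
next
  fix i j k assume "i \<in> {..length xs}" "j \<in> {..length xs}" "k \<in> {..length xs}"
    and ijk: "one_point_extension le xs L H i j \<and> one_point_extension le xs L H j k"
  have down: "a \<in> set xs \<Longrightarrow> l \<in> L \<Longrightarrow> le a l \<Longrightarrow> a \<in> L"
    and up: "a \<in> set xs \<Longrightarrow> h \<in> H \<Longrightarrow> le h a \<Longrightarrow> a \<in> H"
    and below: "l \<in> L \<Longrightarrow> h \<in> H \<Longrightarrow> le l h" for a l h
    using cut unfolding is_cut_def by blast+
  show "one_point_extension le xs L H i k"
    using ijk
    by (cases "i < length xs"; cases "j < length xs"; cases "k < length xs")
      (auto simp: one_point_extension_def intro: down up below is_po_trans[OF po])
qed

lemma random_po_realign:
  assumes rp: "random_po le" and A: "finite A" and f: "inj_on f A" and e: "inj_on e A"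
    and fe: "\<forall>x\<in>A. \<forall>y\<in>A. le (f x) (f y) \<longleftrightarrow> le (e x) (e y)"
  shows "\<exists>g. bij g \<and> (\<forall>x y. le x y \<longleftrightarrow> le (g x) (g y)) \<and> (\<forall>x\<in>A. g (f x) = e x)"
proof -
  define m where "m p = e (the_inv_into A f p)" for p
  have m_f: "x \<in> A \<Longrightarrow> m (f x) = e x" for x unfolding m_def using the_inv_into_f_f[OF f] by simp
  have m_inj: "inj_on m (f ` A)"
  proof (rule inj_onI)
    fix p q assume "p \<in> f ` A" "q \<in> f ` A" "m p = m q"
    then obtain x y where "x \<in> A" "y \<in> A" "p = f x" "q = f y" "e x = e y" by (auto simp: m_f)
    then show "p = q" using e by (simp add: inj_on_eq_iff)
  qed
  have m_le: "\<forall>p\<in>f ` A. \<forall>q\<in>f ` A. le p q \<longleftrightarrow> le (m p) (m q)"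
    using fe by (simp add: m_f)
  obtain g where "bij g" "\<forall>x y. le x y \<longleftrightarrow> le (g x) (g y)" "\<forall>p\<in>f ` A. g p = m p"
    using random_po_homogeneous[OF rp finite_imageI[OF A] m_inj m_le] by blast
  then show ?thesis using m_f by auto
qed

lemma random_po_one_point_extension:
  assumes rp: "random_po le" and dist: "distinct xs" and r: "is_po_on {..length xs} r"
    and r_xs: "\<forall>i<length xs. \<forall>j<length xs. r i j \<longleftrightarrow> le (xs ! i) (xs ! j)"
  shows "\<exists>w. w \<notin> set xs \<and> (\<forall>i<length xs. (le (xs ! i) w \<longleftrightarrow> r i (length xs))
    \<and> (le w (xs ! i) \<longleftrightarrow> r (length xs) i))"
proof -
  let ?k = "length xs"
  obtain f :: "nat \<Rightarrow> 'a" where f: "inj_on f {..?k}" "\<forall>i\<in>{..?k}. \<forall>j\<in>{..?k}. r i j \<longleftrightarrow> le (f i) (f j)"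
    using random_po_universal[OF rp _ r] by blast
  have f_inj: "inj_on f {..<?k}" using f(1) by (rule inj_on_subset) auto
  have xs_inj: "inj_on ((!) xs) {..<?k}" using dist by (simp add: inj_on_nth)
  have "\<forall>i\<in>{..<?k}. \<forall>j\<in>{..<?k}. le (f i) (f j) \<longleftrightarrow> le (xs ! i) (xs ! j)"
    using f(2) r_xs by simp
  then obtain g where g: "bij g" "\<forall>x y. le x y \<longleftrightarrow> le (g x) (g y)" "\<forall>i\<in>{..<?k}. g (f i) = xs ! i"
    using random_po_realign[OF rp finite_lessThan f_inj xs_inj] by blast
  define w where "w = g (f ?k)"
  have "le (xs ! i) w \<longleftrightarrow> r i ?k" "le w (xs ! i) \<longleftrightarrow> r ?k i" if i: "i < ?k" for i
  proof -
    have "le (xs ! i) w \<longleftrightarrow> le (g (f i)) (g (f ?k))" using g(3) i unfolding w_def by simp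
    also have "\<dots> \<longleftrightarrow> le (f i) (f ?k)" by (rule g(2)[rule_format, symmetric])
    finally show "le (xs ! i) w \<longleftrightarrow> r i ?k" using f(2) i by simp
    have "le w (xs ! i) \<longleftrightarrow> le (g (f ?k)) (g (f i))" using g(3) i unfolding w_def by simp
    also have "\<dots> \<longleftrightarrow> le (f ?k) (f i)" by (rule g(2)[rule_format, symmetric])
    finally show "le w (xs ! i) \<longleftrightarrow> r ?k i" using f(2) i by simp
  qed
  moreover have "w \<notin> set xs"
  proof
    assume "w \<in> set xs"
    then obtain i where "i < ?k" "w = xs ! i" by (auto simp: in_set_conv_nth)
    then have i: "i < ?k" "g (f ?k) = g (f i)" using g(3) unfolding w_def by simp_all
    then have "f ?k = f i" using g(1) by (simp add: bij_def inj_eq)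
    then show False using f(1) i(1) by (simp add: inj_on_eq_iff)
  qed
  ultimately show ?thesis by blast
qed

lemma random_po_realizes_cut:
  assumes rp: "random_po le" and fin: "finite F" and cut: "is_cut le F L H"
  shows "\<exists>w. w \<notin> F \<and> realizes_cut le F L H w"
proof -
  obtain xs where xs: "set xs = F" "distinct xs" using finite_distinct_list[OF fin] by blast
  let ?r = "one_point_extension le xs L H"
  have r_po: "is_po_on {..length xs} ?r"
    using is_po_on_one_point_extension[OF random_po_is_po[OF rp] _ xs(2)] cut xs(1) by blast
  have r_xs: "\<forall>i<length xs. \<forall>j<length xs. ?r i j \<longleftrightarrow> le (xs ! i) (xs ! j)"
    by (simp add: one_point_extension_def)
  obtain w where w: "w \<notin> set xs"
    "\<forall>i<length xs. (le (xs ! i) w \<longleftrightarrow> ?r i (length xs)) \<and> (le w (xs ! i) \<longleftrightarrow> ?r (length xs) i)"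
    using random_po_one_point_extension[OF rp xs(2) r_po r_xs] by blast
  have "realizes_cut le (set xs) L H w"
    unfolding realizes_cut_def
  proof (intro conjI ballI)
    fix a assume "a \<in> set xs"
    then obtain i where "i < length xs" "a = xs ! i" by (auto simp: in_set_conv_nth)
    then show "le a w \<longleftrightarrow> a \<in> L" "le w a \<longleftrightarrow> a \<in> H"
      using w(2) by (simp_all add: one_point_extension_def)
  qed
  then show ?thesis using w(1) xs(1) by blast
qed

definition open_interval :: "('a \<Rightarrow> 'a \<Rightarrow> bool) \<Rightarrow> 'a \<Rightarrow> 'a \<Rightarrow> 'a set" where
  "open_interval le c d = {u. lt le c u \<and> lt le u d}"

lemma random_po_realizes_cut_in_interval:
  assumes rp: "random_po le" and cd: "lt le c d" and fin: "finite F"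
    and F: "F \<subseteq> open_interval le c d" and cut: "is_cut le F L H"
  shows "\<exists>w\<in>open_interval le c d. w \<notin> F \<and> realizes_cut le F L H w"
proof -
  have po: "is_po le" using random_po_is_po[OF rp] .
  have inside: "le c b \<and> \<not> le b c \<and> le b d \<and> \<not> le d b" if "b \<in> F" for b
    using F that by (auto simp: open_interval_def lt_iff_le_not_le[OF po])
  have cd': "le c d" "\<not> le d c" using cd by (simp_all add: lt_iff_le_not_le[OF po])
  have cd_notin: "c \<notin> F" "d \<notin> F" using inside cd' is_po_refl[OF po] by blast+
  from cut have LH: "L \<subseteq> F" "H \<subseteq> F" "L \<inter> H = {}"
    and down: "\<And>a l. a \<in> F \<Longrightarrow> l \<in> L \<Longrightarrow> le a l \<Longrightarrow> a \<in> L"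
    and up: "\<And>a h. a \<in> F \<Longrightarrow> h \<in> H \<Longrightarrow> le h a \<Longrightarrow> a \<in> H"
    and below: "\<And>l h. l \<in> L \<Longrightarrow> h \<in> H \<Longrightarrow> le l h"
    unfolding is_cut_def by blast+
  have cut': "is_cut le (F \<union> {c, d}) (L \<union> {c}) (H \<union> {d})"
    unfolding is_cut_def
  proof (intro conjI ballI impI)
    show "(L \<union> {c}) \<inter> (H \<union> {d}) = {}" using LH cd_notin cd' by auto
  next
    fix a l assume "a \<in> F \<union> {c, d}" "l \<in> L \<union> {c}" "le a l"
    then show "a \<in> L \<union> {c}" using LH inside cd' by (auto dest: down)
  next
    fix a h assume "a \<in> F \<union> {c, d}" "h \<in> H \<union> {d}" "le h a"
    then show "a \<in> H \<union> {d}" using LH inside cd' by (auto dest: up)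
  next
    fix l h assume "l \<in> L \<union> {c}" "h \<in> H \<union> {d}"
    then show "le l h" using LH inside cd' by (auto simp: below)
  qed (use LH in blast)+
  have "finite (F \<union> {c, d})" using fin by simp
  then obtain w where w: "w \<notin> F \<union> {c, d}" "realizes_cut le (F \<union> {c, d}) (L \<union> {c}) (H \<union> {d}) w"
    using random_po_realizes_cut[OF rp _ cut'] by blast
  have w_le: "le a w \<longleftrightarrow> a \<in> L \<union> {c}" and le_w: "le w a \<longleftrightarrow> a \<in> H \<union> {d}"
    if "a \<in> F \<union> {c, d}" for a
    using w(2) that unfolding realizes_cut_def by blast+
  have "c \<noteq> d" using cd' is_po_refl[OF po] by blast
  then have "le c w \<and> \<not> le w c \<and> le w d \<and> \<not> le d w"
    using w_le[of c] w_le[of d] le_w[of c] le_w[of d] LH cd_notin by blast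
  then have "w \<in> open_interval le c d"
    by (simp add: open_interval_def lt_iff_le_not_le[OF po])
  moreover have "realizes_cut le F L H w"
    unfolding realizes_cut_def using w_le le_w cd_notin by blast
  ultimately show ?thesis using w(1) by blast
qed

section \<open>Back and forth\<close>

definition partial_iso :: "('a \<Rightarrow> 'a \<Rightarrow> bool) \<Rightarrow> ('a \<times> 'a) set \<Rightarrow> bool" where
  "partial_iso le R \<longleftrightarrow> (\<forall>a b a' b'. (a, b) \<in> R \<longrightarrow> (a', b') \<in> R \<longrightarrow> (le a a' \<longleftrightarrow> le b b'))"

lemma partial_iso_converse: "partial_iso le (converse R) \<longleftrightarrow> partial_iso le R"
  unfolding partial_iso_def by blast

lemma partial_iso_single_valued:
  assumes "is_po le" "partial_iso le R" "(a, b) \<in> R" "(a, b') \<in> R"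
  shows "b = b'"
  using assms is_po_refl is_po_antisym unfolding partial_iso_def by metis

lemma partial_iso_injective:
  assumes "is_po le" "partial_iso le R" "(a, b) \<in> R" "(a', b) \<in> R"
  shows "a = a'"
  using partial_iso_single_valued[of le "converse R"] assms partial_iso_converse by blast

lemma partial_iso_cut:
  assumes po: "is_po le" and R: "partial_iso le R" and x: "x \<notin> fst ` R"
  shows "is_cut le (snd ` R) {b. \<exists>a. (a, b) \<in> R \<and> le a x} {b. \<exists>a. (a, b) \<in> R \<and> le x a}"
proof -
  have R_le: "(a, b) \<in> R \<Longrightarrow> (a', b') \<in> R \<Longrightarrow> le a a' \<longleftrightarrow> le b b'" for a b a' b'
    using R unfolding partial_iso_def by blast
  have "a1 = a2" if "(a1, b) \<in> R" "le a1 x" "(a2, b) \<in> R" "le x a2" for a1 a2 b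
    using partial_iso_injective[OF po R that(1,3)] .
  then have disjoint: "False" if "(a1, b) \<in> R" "le a1 x" "(a2, b) \<in> R" "le x a2" for a1 a2 b
    using that x is_po_antisym[OF po] by force
  have lower: "le a x" if "(a, b) \<in> R" "(a', b') \<in> R" "le b b'" "le a' x" for a b a' b'
    using R_le[OF that(1,2)] that(3,4) is_po_trans[OF po] by blast
  have upper: "le x a'" if "(a, b) \<in> R" "(a', b') \<in> R" "le b b'" "le x a" for a b a' b'
    using R_le[OF that(1,2)] that(3,4) is_po_trans[OF po] by blast
  have between: "le l h" if "(a, l) \<in> R" "le a x" "(a', h) \<in> R" "le x a'" for a l a' h
    using R_le[OF that(1,3)] is_po_trans[OF po that(2,4)] by blast
  show ?thesis
    unfolding is_cut_def
  proof (intro conjI ballI impI)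
    fix b l assume "b \<in> snd ` R" "l \<in> {b. \<exists>a. (a, b) \<in> R \<and> le a x}" "le b l"
    then show "b \<in> {b. \<exists>a. (a, b) \<in> R \<and> le a x}" using lower by fastforce
  next
    fix b h assume "b \<in> snd ` R" "h \<in> {b. \<exists>a. (a, b) \<in> R \<and> le x a}" "le h b"
    then show "b \<in> {b. \<exists>a. (a, b) \<in> R \<and> le x a}" using upper by fastforce
  qed (force, force, use disjoint in blast, use between in blast)
qed

lemma partial_iso_insert:
  assumes po: "is_po le" and R: "partial_iso le R"
    and w: "realizes_cut le (snd ` R) {b. \<exists>a. (a, b) \<in> R \<and> le a x} {b. \<exists>a. (a, b) \<in> R \<and> le x a} w"
  shows "partial_iso le (insert (x, w) R)"
proof -
  have R_le: "(a, b) \<in> R \<Longrightarrow> (a', b') \<in> R \<Longrightarrow> le a a' \<longleftrightarrow> le b b'" for a b a' b'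
    using R unfolding partial_iso_def by blast
  have w_le: "le b w \<longleftrightarrow> le a x" "le w b \<longleftrightarrow> le x a" if ab: "(a, b) \<in> R" for a b
  proof -
    have "b \<in> snd ` R" using ab by force
    moreover have "(a', b) \<in> R \<Longrightarrow> a' = a" for a' using partial_iso_injective[OF po R _ ab] .
    ultimately show "le b w \<longleftrightarrow> le a x" "le w b \<longleftrightarrow> le x a"
      using w ab unfolding realizes_cut_def by blast+
  qed
  show ?thesis
    unfolding partial_iso_def
  proof (intro allI impI)
    fix a b a' b' assume "(a, b) \<in> insert (x, w) R" "(a', b') \<in> insert (x, w) R"
    then show "le a a' \<longleftrightarrow> le b b'"
      using R_le w_le is_po_refl[OF po] by (elim insertE) auto
  qed
qed

lemma partial_iso_extend:
  assumes po: "is_po le" and R: "partial_iso le R" and RB: "snd ` R \<subseteq> B"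
    and realize: "\<And>L H. is_cut le (snd ` R) L H \<Longrightarrow> \<exists>w\<in>B. realizes_cut le (snd ` R) L H w"
  shows "\<exists>y\<in>B. partial_iso le (insert (x, y) R)"
proof (cases "x \<in> fst ` R")
  case True
  then obtain y where "(x, y) \<in> R" by force
  then have "y \<in> B" "insert (x, y) R = R" using RB by force+
  then show ?thesis using R by (intro bexI[of _ y]) simp_all
next
  case False
  then show ?thesis
    using realize[OF partial_iso_cut[OF po R False]] partial_iso_insert[OF po R] by blast
qed

lemma partial_iso_UN_chain:
  fixes S :: "nat \<Rightarrow> ('a \<times> 'a) set"
  assumes mono: "\<And>m n. m \<le> n \<Longrightarrow> S m \<subseteq> S n" and S: "\<And>n. partial_iso le (S n)"
  shows "partial_iso le (\<Union>n. S n)"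
  unfolding partial_iso_def
proof (intro allI impI)
  fix a b a' b' assume "(a, b) \<in> (\<Union>n. S n)" "(a', b') \<in> (\<Union>n. S n)"
  then obtain m n where "(a, b) \<in> S m" "(a', b') \<in> S n" by blast
  then have "(a, b) \<in> S (max m n)" "(a', b') \<in> S (max m n)"
    using mono[OF max.cobounded1] mono[OF max.cobounded2] by blast+
  then show "le a a' \<longleftrightarrow> le b b'" using S[of "max m n"] unfolding partial_iso_def by blast
qed

lemma partial_iso_imp_order_iso:
  assumes po: "is_po le" and R: "partial_iso le R" and A: "fst ` R = A" and B: "snd ` R = B"
  shows "\<exists>h. (\<forall>x\<in>A. \<forall>y\<in>A. le x y \<longleftrightarrow> le (h x) (h y)) \<and> h ` A = B"
proof -
  define h where "h x = (THE y. (x, y) \<in> R)" for x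
  have h: "(x, h x) \<in> R" if x: "x \<in> A" for x
  proof -
    obtain y where y: "(x, y) \<in> R" using A x by force
    then have "h x = y" unfolding h_def using partial_iso_single_valued[OF po R y] by blast
    then show ?thesis using y by simp
  qed
  have "le x y \<longleftrightarrow> le (h x) (h y)" if "x \<in> A" "y \<in> A" for x y
    using R h[OF that(1)] h[OF that(2)] unfolding partial_iso_def by blast
  moreover have "h ` A = B"
  proof
    show "h ` A \<subseteq> B" using h B by force
    show "B \<subseteq> h ` A"
    proof
      fix b assume "b \<in> B"
      then obtain a where ab: "(a, b) \<in> R" using B by force
      then have "a \<in> A" using A by force
      with ab show "b \<in> h ` A" using partial_iso_single_valued[OF po R h] by blast
    qed
  qed
  ultimately show ?thesis by blast
qed

definition back_and_forth_system :: "('a \<Rightarrow> 'a \<Rightarrow> bool) \<Rightarrow> 'a set \<Rightarrow> 'a set \<Rightarrow> bool" where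
  "back_and_forth_system le A B \<longleftrightarrow>
     (\<forall>R. finite R \<and> partial_iso le R \<and> R \<subseteq> A \<times> B \<longrightarrow>
        (\<forall>x\<in>A. \<exists>y\<in>B. partial_iso le (insert (x, y) R)) \<and> (\<forall>y\<in>B. \<exists>x\<in>A. partial_iso le (insert (x, y) R)))"

lemma back_and_forth_step:
  assumes AB: "back_and_forth_system le A B"
    and R: "finite R" "partial_iso le R" "R \<subseteq> A \<times> B" and x: "x \<in> A" and y: "y \<in> B"
  shows "\<exists>R'. finite R' \<and> partial_iso le R' \<and> R' \<subseteq> A \<times> B \<and> R \<subseteq> R' \<and> x \<in> fst ` R' \<and> y \<in> snd ` R'"
proof -
  obtain y' where y': "y' \<in> B" "partial_iso le (insert (x, y') R)"
    using AB R x unfolding back_and_forth_system_def by blast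
  let ?R1 = "insert (x, y') R"
  have "finite ?R1" "?R1 \<subseteq> A \<times> B" using R x y' by auto
  then obtain x' where x': "x' \<in> A" "partial_iso le (insert (x', y) ?R1)"
    using AB y' y unfolding back_and_forth_system_def by blast
  show ?thesis
    using R x y x' y' by (intro exI[of _ "insert (x', y) ?R1"]) force
qed

lemma back_and_forth:
  assumes po: "is_po le" and A: "countable A" "A \<noteq> {}" and B: "countable B" "B \<noteq> {}"
    and AB: "back_and_forth_system le A B"
  shows "\<exists>h. (\<forall>x\<in>A. \<forall>y\<in>A. le x y \<longleftrightarrow> le (h x) (h y)) \<and> h ` A = B"
proof -
  define good where "good R \<longleftrightarrow> finite R \<and> partial_iso le R \<and> R \<subseteq> A \<times> B" for R
  define a where "a = from_nat_into A"
  define b where "b = from_nat_into B"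
  define step where
    "step n R = (SOME R'. good R' \<and> R \<subseteq> R' \<and> a n \<in> fst ` R' \<and> b n \<in> snd ` R')" for n R
  have step: "good (step n R) \<and> R \<subseteq> step n R \<and> a n \<in> fst ` step n R \<and> b n \<in> snd ` step n R"
    if R: "good R" for n R
    unfolding step_def
  proof (rule someI_ex)
    have "a n \<in> A" "b n \<in> B" unfolding a_def b_def using A(2) B(2) by (simp_all add: from_nat_into)
    moreover have "finite R" "partial_iso le R" "R \<subseteq> A \<times> B" using R unfolding good_def by blast+
    ultimately show "\<exists>R'. good R' \<and> R \<subseteq> R' \<and> a n \<in> fst ` R' \<and> b n \<in> snd ` R'"
      unfolding good_def using back_and_forth_step[OF AB] by meson
  qed
  define S where "S = rec_nat {} step"
  have S_Suc: "S (Suc n) = step n (S n)" for n by (simp add: S_def)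
  have S_good: "good (S n)" for n
  proof (induction n)
    case 0
    show ?case by (simp add: S_def good_def partial_iso_def)
  next
    case (Suc n)
    then show ?case using step S_Suc by simp
  qed
  have mono: "m \<le> n \<Longrightarrow> S m \<subseteq> S n" for m n
    by (rule lift_Suc_mono_le[of S]) (use step S_good S_Suc in auto)
  define U where "U = (\<Union>n. S n)"
  have "partial_iso le U"
    unfolding U_def using partial_iso_UN_chain mono S_good good_def by blast
  moreover have "fst ` U = A"
  proof
    show "fst ` U \<subseteq> A" using S_good unfolding U_def good_def by force
    show "A \<subseteq> fst ` U"
    proof
      fix x assume "x \<in> A"
      then obtain n where "x = a n" using range_from_nat_into[OF A(2,1)] a_def by blast
      then show "x \<in> fst ` U" using step[OF S_good] S_Suc unfolding U_def by fastforce
    qed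
  qed
  moreover have "snd ` U = B"
  proof
    show "snd ` U \<subseteq> B" using S_good unfolding U_def good_def by force
    show "B \<subseteq> snd ` U"
    proof
      fix y assume "y \<in> B"
      then obtain n where "y = b n" using range_from_nat_into[OF B(2,1)] b_def by blast
      then show "y \<in> snd ` U" using step[OF S_good] S_Suc unfolding U_def by fastforce
    qed
  qed
  ultimately show ?thesis using partial_iso_imp_order_iso[OF po] by blast
qed

lemma random_po_open_interval_iso:
  assumes rp: "random_po le" and cd: "lt le c d"
  shows "\<exists>h. (\<forall>x\<in>open_interval le c d. \<forall>y\<in>open_interval le c d. le x y \<longleftrightarrow> le (h x) (h y))
    \<and> h ` open_interval le c d = UNIV"
proof (rule back_and_forth)
  show po: "is_po le" using random_po_is_po[OF rp] .
  show "countable (open_interval le c d)" "countable (UNIV :: 'a set)"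
    using random_po_countable[OF rp] by (auto intro: countable_subset)
  have "is_cut le {} {} {}" by (simp add: is_cut_def)
  then show "open_interval le c d \<noteq> {}"
    using random_po_realizes_cut_in_interval[OF rp cd finite.emptyI] by blast
  show "UNIV \<noteq> {}" by simp
  show "back_and_forth_system le (open_interval le c d) UNIV"
    unfolding back_and_forth_system_def
  proof (intro allI impI conjI ballI)
    fix R x assume R: "finite R \<and> partial_iso le R \<and> R \<subseteq> open_interval le c d \<times> UNIV"
    show "\<exists>y\<in>UNIV. partial_iso le (insert (x, y) R)"
    proof (rule partial_iso_extend[OF po])
      fix L H assume "is_cut le (snd ` R) L H"
      then show "\<exists>w\<in>UNIV. realizes_cut le (snd ` R) L H w"
        using random_po_realizes_cut[OF rp finite_imageI] R by blast
    qed (use R in auto)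
  next
    fix R y assume R: "finite R \<and> partial_iso le R \<and> R \<subseteq> open_interval le c d \<times> UNIV"
    have "\<exists>x\<in>open_interval le c d. partial_iso le (insert (y, x) (converse R))"
    proof (rule partial_iso_extend[OF po])
      show "partial_iso le (converse R)" using R partial_iso_converse by blast
      show sub: "snd ` converse R \<subseteq> open_interval le c d" using R by force
      have fin: "finite (snd ` converse R)" using R by simp
      fix L H assume "is_cut le (snd ` converse R) L H"
      from random_po_realizes_cut_in_interval[OF rp cd fin sub this]
      show "\<exists>w\<in>open_interval le c d. realizes_cut le (snd ` converse R) L H w" by blast
    qed
    then obtain x where "x \<in> open_interval le c d" "partial_iso le (insert (y, x) (converse R))"
      by blast
    moreover have "insert (y, x) (converse R) = converse (insert (x, y) R)" by auto
    ultimately show "\<exists>x\<in>open_interval le c d. partial_iso le (insert (x, y) R)"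
      using partial_iso_converse by metis
  qed
qed

section \<open>Cycl inside the interval (c, d)\<close>

lemma Cycl_open_interval_iff:
  assumes po: "is_po le" and cd: "lt le c d"
  shows "Cycl le d c x \<longleftrightarrow> x \<in> open_interval le c d"
  using cd is_po_antisym[OF po] is_po_trans[OF po]
  unfolding Cycl_def lt_def incomp_def open_interval_def by (smt (verit) mem_Collect_eq)

lemma Cycl_lt_iff:
  assumes po: "is_po le" and x: "x \<in> open_interval le c d" and y: "y \<in> open_interval le c d"
  shows "Cycl le c x y \<longleftrightarrow> lt le x y"
  using x y is_po_antisym[OF po] is_po_trans[OF po]
  unfolding Cycl_def lt_def incomp_def open_interval_def by (smt (verit) mem_Collect_eq)

definition incomp_gadget :: "('a \<Rightarrow> 'a \<Rightarrow> 'a \<Rightarrow> bool) \<Rightarrow> 'a \<Rightarrow> 'a \<Rightarrow> 'a \<Rightarrow> 'a \<Rightarrow> 'a \<Rightarrow> 'a \<Rightarrow> 'a \<Rightarrow> bool" where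
  "incomp_gadget R c d x y p q r \<longleftrightarrow> R x y p \<and> R x y r \<and> R x c r \<and> R x d p \<and> R y d q
     \<and> R y p c \<and> R y r q \<and> R c q p \<and> R c r q \<and> R d q p"

lemma incomp_gadget_imp_incomp:
  assumes po: "is_po le" and x: "x \<in> open_interval le c d" and y: "y \<in> open_interval le c d"
    and "incomp_gadget (Cycl le) c d x y p q r"
  shows "incomp le x y"
  using assms is_po_antisym[OF po] is_po_trans[OF po]
  unfolding incomp_gadget_def Cycl_def lt_def incomp_def open_interval_def
  by (smt (verit) mem_Collect_eq)

lemma incomp_imp_incomp_gadget:
  assumes rp: "random_po le" and cd: "lt le c d"
    and x: "x \<in> open_interval le c d" and y: "y \<in> open_interval le c d" and xy: "incomp le x y"
  shows "\<exists>p q r. incomp_gadget (Cycl le) c d x y p q r"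
proof -
  have po: "is_po le" using random_po_is_po[OF rp] .
  have T: "le c x" "le x d" "le c y" "le y d" "le c d" "\<not> le x c" "\<not> le d x" "\<not> le y c" "\<not> le d y"
    "\<not> le d c" "\<not> le x y" "\<not> le y x"
    using x y cd xy by (auto simp: open_interval_def lt_iff_le_not_le[OF po] incomp_def)
  have D: "x \<noteq> y" "x \<noteq> c" "x \<noteq> d" "y \<noteq> c" "y \<noteq> d" "c \<noteq> d" using T is_po_refl[OF po] by metis+
  obtain p where "p \<notin> {x, y, c, d}" "realizes_cut le {x, y, c, d} {} {x, d} p"
    using random_po_realizes_cut[OF rp, of "{x, y, c, d}" "{}" "{x, d}"] T D by (auto simp: is_cut_def)
  then have Tp: "\<not> le x p" "\<not> le y p" "\<not> le c p" "\<not> le d p" "le p x" "\<not> le p y" "\<not> le p c" "le p d"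
    "p \<noteq> x" "p \<noteq> y" "p \<noteq> c" "p \<noteq> d"
    using D by (auto simp: realizes_cut_def)
  obtain q where "q \<notin> {x, y, c, d, p}" "realizes_cut le {x, y, c, d, p} {c} {} q"
    using random_po_realizes_cut[OF rp, of "{x, y, c, d, p}" "{c}" "{}"] T D Tp by (auto simp: is_cut_def)
  then have Tq: "\<not> le x q" "\<not> le y q" "le c q" "\<not> le d q" "\<not> le p q" "\<not> le q x" "\<not> le q y"
    "\<not> le q c" "\<not> le q d" "\<not> le q p" "q \<noteq> x" "q \<noteq> y" "q \<noteq> c" "q \<noteq> d" "q \<noteq> p"
    using D Tp by (auto simp: realizes_cut_def)
  obtain r where "r \<notin> {x, y, c, d, p, q}" "realizes_cut le {x, y, c, d, p, q} {c} {x, d, q} r"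
    using random_po_realizes_cut[OF rp, of "{x, y, c, d, p, q}" "{c}" "{x, d, q}"] T D Tp Tq
    by (auto simp: is_cut_def)
  then have Tr: "\<not> le x r" "\<not> le y r" "le c r" "\<not> le d r" "\<not> le p r" "\<not> le q r"
    "le r x" "\<not> le r y" "\<not> le r c" "le r d" "\<not> le r p" "le r q"
    "r \<noteq> x" "r \<noteq> y" "r \<noteq> c" "r \<noteq> d" "r \<noteq> p" "r \<noteq> q"
    using D Tp Tq by (auto simp: realizes_cut_def)
  have "incomp_gadget (Cycl le) c d x y p q r"
    using T D Tp Tq Tr by (simp add: incomp_gadget_def Cycl_def lt_def incomp_def)
  then show ?thesis by blast
qed

text \<open>Between points of the interval, lt and incomp are pp-definable by Cycl_lt_iff and
  the incomparability gadget, so this pattern becomes a pp-formula in Cycl, c and d.\<close>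
definition low_pattern :: "('a \<Rightarrow> 'a \<Rightarrow> bool) \<Rightarrow> 'a \<Rightarrow> 'a \<Rightarrow> 'a \<Rightarrow> 'a \<Rightarrow> 'a \<Rightarrow> 'a \<Rightarrow> bool" where
  "low_pattern le x y z u v w \<longleftrightarrow>
     lt le x u \<and> lt le y w \<and> lt le z u \<and> lt le v w \<and> incomp le x v \<and> incomp le y z
     \<and> Cycl le x y w \<and> Cycl le x z v \<and> Cycl le x u w \<and> Cycl le z u w \<and> Cycl le z v w"

lemma low_pattern_imp_Low:
  assumes po: "is_po le" and "low_pattern le x y z u v w"
  shows "Low le x y z"
proof -
  have "Cycl le x y w" "Cycl le x z v" "Cycl le x u w" "Cycl le z u w" "Cycl le z v w"
    "lt le x u" "lt le y w" "lt le z u" "lt le v w" "incomp le x v" "incomp le y z"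
    using assms(2) unfolding low_pattern_def by blast+
  then show ?thesis
    using po unfolding Low_def Cycl_def lt_def incomp_def by (metis is_po_trans)
qed

lemma low_pattern_if_lt_incomp:
  assumes rp: "random_po le" and cd: "lt le c d"
    and x: "x \<in> open_interval le c d" and y: "y \<in> open_interval le c d" and z: "z \<in> open_interval le c d"
    and A: "lt le x y" "incomp le z x" "incomp le z y"
  shows "\<exists>u\<in>open_interval le c d. \<exists>v\<in>open_interval le c d. \<exists>w\<in>open_interval le c d.
    low_pattern le x y z u v w"
proof -
  have po: "is_po le" using random_po_is_po[OF rp] .
  have T0: "le c x" "le x d" "le c y" "le y d" "le c z" "le z d" "le c d" "\<not> le x c" "\<not> le d x"
    "\<not> le y c" "\<not> le d y" "\<not> le z c" "\<not> le d z" "\<not> le d c"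
    using x y z cd by (auto simp: open_interval_def lt_iff_le_not_le[OF po])
  have D0: "x \<noteq> c" "x \<noteq> d" "y \<noteq> c" "y \<noteq> d" "z \<noteq> c" "z \<noteq> d" "c \<noteq> d"
    using T0 is_po_refl[OF po] by metis+
  have J: "a \<in> open_interval le c d" if "le c a" "\<not> le a c" "le a d" "\<not> le d a" for a
    using that by (simp add: open_interval_def lt_iff_le_not_le[OF po])
  have T: "le x y" "\<not> le y x" "\<not> le x z" "\<not> le z x" "\<not> le y z" "\<not> le z y"
    using A by (auto simp: lt_iff_le_not_le[OF po] incomp_def)
  have D: "x \<noteq> y" "x \<noteq> z" "y \<noteq> z" using T is_po_refl[OF po] by metis+
  obtain u where "u \<notin> {x, y, z, c, d}" "realizes_cut le {x, y, z, c, d} {x, z, c} {d} u"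
    using random_po_realizes_cut[OF rp, of "{x, y, z, c, d}" "{x, z, c}" "{d}"] T0 D0 T D
    by (auto simp: is_cut_def)
  then have Tu: "le x u" "\<not> le y u" "le z u" "le c u" "\<not> le d u" "\<not> le u x" "\<not> le u y"
    "\<not> le u z" "\<not> le u c" "le u d" "u \<noteq> x" "u \<noteq> y" "u \<noteq> z" "u \<noteq> c" "u \<noteq> d"
    using D0 D by (auto simp: realizes_cut_def)
  obtain v where "v \<notin> {x, y, z, c, d, u}" "realizes_cut le {x, y, z, c, d, u} {z, c} {d} v"
    using random_po_realizes_cut[OF rp, of "{x, y, z, c, d, u}" "{z, c}" "{d}"] T0 D0 T D Tu
    by (auto simp: is_cut_def)
  then have Tv: "\<not> le x v" "\<not> le y v" "le z v" "le c v" "\<not> le d v" "\<not> le u v" "\<not> le v x"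
    "\<not> le v y" "\<not> le v z" "\<not> le v c" "le v d" "\<not> le v u"
    "v \<noteq> x" "v \<noteq> y" "v \<noteq> z" "v \<noteq> c" "v \<noteq> d" "v \<noteq> u"
    using D0 D Tu by (auto simp: realizes_cut_def)
  obtain w where "w \<notin> {x, y, z, c, d, u, v}" "realizes_cut le {x, y, z, c, d, u, v} {x, y, z, c, u, v} {d} w"
    using random_po_realizes_cut[OF rp, of "{x, y, z, c, d, u, v}" "{x, y, z, c, u, v}" "{d}"]
      T0 D0 T D Tu Tv by (auto simp: is_cut_def)
  then have Tw: "le x w" "le y w" "le z w" "le c w" "\<not> le d w" "le u w" "le v w"
    "\<not> le w x" "\<not> le w y" "\<not> le w z" "\<not> le w c" "le w d" "\<not> le w u" "\<not> le w v"
    "w \<noteq> x" "w \<noteq> y" "w \<noteq> z" "w \<noteq> c" "w \<noteq> d" "w \<noteq> u" "w \<noteq> v"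
    using D0 D Tu Tv by (auto simp: realizes_cut_def)
  have "low_pattern le x y z u v w"
    using T0 D0 T D Tu Tv Tw by (simp add: low_pattern_def Cycl_def lt_def incomp_def)
  moreover have "u \<in> open_interval le c d" "v \<in> open_interval le c d" "w \<in> open_interval le c d"
    using Tu Tv Tw by (simp_all add: J)
  ultimately show ?thesis by blast
qed

lemma low_pattern_if_incomp_lt:
  assumes rp: "random_po le" and cd: "lt le c d"
    and x: "x \<in> open_interval le c d" and y: "y \<in> open_interval le c d" and z: "z \<in> open_interval le c d"
    and B: "lt le x z" "incomp le y x" "incomp le y z"
  shows "\<exists>u\<in>open_interval le c d. \<exists>v\<in>open_interval le c d. \<exists>w\<in>open_interval le c d.
    low_pattern le x y z u v w"
proof -
  have po: "is_po le" using random_po_is_po[OF rp] .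
  have T0: "le c x" "le x d" "le c y" "le y d" "le c z" "le z d" "le c d" "\<not> le x c" "\<not> le d x"
    "\<not> le y c" "\<not> le d y" "\<not> le z c" "\<not> le d z" "\<not> le d c"
    using x y z cd by (auto simp: open_interval_def lt_iff_le_not_le[OF po])
  have D0: "x \<noteq> c" "x \<noteq> d" "y \<noteq> c" "y \<noteq> d" "z \<noteq> c" "z \<noteq> d" "c \<noteq> d"
    using T0 is_po_refl[OF po] by metis+
  have J: "a \<in> open_interval le c d" if "le c a" "\<not> le a c" "le a d" "\<not> le d a" for a
    using that by (simp add: open_interval_def lt_iff_le_not_le[OF po])
  have T: "le x z" "\<not> le z x" "\<not> le x y" "\<not> le y x" "\<not> le y z" "\<not> le z y"
    using B by (auto simp: lt_iff_le_not_le[OF po] incomp_def)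
  have D: "x \<noteq> y" "x \<noteq> z" "y \<noteq> z" using T is_po_refl[OF po] by metis+
  obtain u where "u \<notin> {x, y, z, c, d}" "realizes_cut le {x, y, z, c, d} {x, z, c} {d} u"
    using random_po_realizes_cut[OF rp, of "{x, y, z, c, d}" "{x, z, c}" "{d}"] T0 D0 T D
    by (auto simp: is_cut_def)
  then have Tu: "le x u" "\<not> le y u" "le z u" "le c u" "\<not> le d u" "\<not> le u x" "\<not> le u y"
    "\<not> le u z" "\<not> le u c" "le u d" "u \<noteq> x" "u \<noteq> y" "u \<noteq> z" "u \<noteq> c" "u \<noteq> d"
    using D0 D by (auto simp: realizes_cut_def)
  obtain v where "v \<notin> {x, y, z, c, d, u}" "realizes_cut le {x, y, z, c, d, u} {c} {d} v"
    using random_po_realizes_cut[OF rp, of "{x, y, z, c, d, u}" "{c}" "{d}"] T0 D0 T D Tu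
    by (auto simp: is_cut_def)
  then have Tv: "\<not> le x v" "\<not> le y v" "\<not> le z v" "le c v" "\<not> le d v" "\<not> le u v" "\<not> le v x"
    "\<not> le v y" "\<not> le v z" "\<not> le v c" "le v d" "\<not> le v u"
    "v \<noteq> x" "v \<noteq> y" "v \<noteq> z" "v \<noteq> c" "v \<noteq> d" "v \<noteq> u"
    using D0 D Tu by (auto simp: realizes_cut_def)
  obtain w where "w \<notin> {x, y, z, c, d, u, v}" "realizes_cut le {x, y, z, c, d, u, v} {y, c, v} {d} w"
    using random_po_realizes_cut[OF rp, of "{x, y, z, c, d, u, v}" "{y, c, v}" "{d}"]
      T0 D0 T D Tu Tv by (auto simp: is_cut_def)
  then have Tw: "\<not> le x w" "le y w" "\<not> le z w" "le c w" "\<not> le d w" "\<not> le u w" "le v w"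
    "\<not> le w x" "\<not> le w y" "\<not> le w z" "\<not> le w c" "le w d" "\<not> le w u" "\<not> le w v"
    "w \<noteq> x" "w \<noteq> y" "w \<noteq> z" "w \<noteq> c" "w \<noteq> d" "w \<noteq> u" "w \<noteq> v"
    using D0 D Tu Tv by (auto simp: realizes_cut_def)
  have "low_pattern le x y z u v w"
    using T0 D0 T D Tu Tv Tw by (simp add: low_pattern_def Cycl_def lt_def incomp_def)
  moreover have "u \<in> open_interval le c d" "v \<in> open_interval le c d" "w \<in> open_interval le c d"
    using Tu Tv Tw by (simp_all add: J)
  ultimately show ?thesis by blast
qed

lemma Low_imp_low_pattern:
  assumes rp: "random_po le" and cd: "lt le c d"
    and x: "x \<in> open_interval le c d" and y: "y \<in> open_interval le c d" and z: "z \<in> open_interval le c d"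
    and "Low le x y z"
  shows "\<exists>u\<in>open_interval le c d. \<exists>v\<in>open_interval le c d. \<exists>w\<in>open_interval le c d.
    low_pattern le x y z u v w"
  using assms low_pattern_if_lt_incomp[OF rp cd x y z] low_pattern_if_incomp_lt[OF rp cd x y z]
  unfolding Low_def by blast

section \<open>The primitive positive interpretation\<close>

definition incomp_gadget_atoms :: "pp_term \<Rightarrow> pp_term \<Rightarrow> pp_term \<Rightarrow> pp_term \<Rightarrow> pp_term \<Rightarrow> pp_atom list" where
  "incomp_gadget_atoms s t p q r = [AR s t p, AR s t r, AR s CstC r, AR s CstD p, AR t CstD q,
     AR t p CstC, AR t r q, AR CstC q p, AR CstC r q, AR CstD q p]"

lemma holds_incomp_gadget_atoms:
  "(\<forall>a\<in>set (incomp_gadget_atoms s t p q r). holds_atom R c d vs a) \<longleftrightarrow>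
   incomp_gadget R c d (eval_term c d vs s) (eval_term c d vs t)
     (eval_term c d vs p) (eval_term c d vs q) (eval_term c d vs r)"
  by (simp add: incomp_gadget_atoms_def incomp_gadget_def)

text \<open>Variables 0--2 are x, y, z; 3--5 are u, v, w of low_pattern; 6--8 and 9--11 are the
  auxiliary points of the gadgets for incomp x v and incomp y z.\<close>
definition low_atoms :: "pp_atom list" where
  "low_atoms =
     map (\<lambda>i. AR CstD CstC (Var i)) [0..<6] @
     [AR (Var 0) (Var 1) (Var 5), AR (Var 0) (Var 2) (Var 4), AR (Var 0) (Var 3) (Var 5),
      AR (Var 2) (Var 3) (Var 5), AR (Var 2) (Var 4) (Var 5),
      AR CstC (Var 0) (Var 3), AR CstC (Var 1) (Var 5), AR CstC (Var 2) (Var 3), AR CstC (Var 4) (Var 5)] @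
     incomp_gadget_atoms (Var 0) (Var 4) (Var 6) (Var 7) (Var 8) @
     incomp_gadget_atoms (Var 1) (Var 2) (Var 9) (Var 10) (Var 11)"

lemma holds_low_atoms:
  "(\<forall>a\<in>set low_atoms. holds_atom R c d [x, y, z, u, v, w, p, q, r, p', q', r'] a) \<longleftrightarrow>
     (\<forall>t\<in>{x, y, z, u, v, w}. R d c t)
     \<and> R x y w \<and> R x z v \<and> R x u w \<and> R z u w \<and> R z v w
     \<and> R c x u \<and> R c y w \<and> R c z u \<and> R c v w
     \<and> incomp_gadget R c d x v p q r \<and> incomp_gadget R c d y z p' q' r'"
  unfolding low_atoms_def by (simp add: ball_Un holds_incomp_gadget_atoms upt_rec)

lemma Low_iff_holds_low_atoms:
  assumes rp: "random_po le" and cd: "lt le c d"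
    and x: "x \<in> open_interval le c d" and y: "y \<in> open_interval le c d" and z: "z \<in> open_interval le c d"
  shows "Low le x y z \<longleftrightarrow> (\<exists>u v w p q r p' q' r'.
    \<forall>a\<in>set low_atoms. holds_atom (Cycl le) c d [x, y, z, u, v, w, p, q, r, p', q', r'] a)"
proof -
  have po: "is_po le" using random_po_is_po[OF rp] .
  note J_iff = Cycl_open_interval_iff[OF po cd]
  note lt_iff = Cycl_lt_iff[OF po]
  show ?thesis
  proof
    assume "Low le x y z"
    then obtain u v w where J: "u \<in> open_interval le c d" "v \<in> open_interval le c d" "w \<in> open_interval le c d"
      and pat: "low_pattern le x y z u v w"
      using Low_imp_low_pattern[OF rp cd x y z] by blast
    obtain p q r where "incomp_gadget (Cycl le) c d x v p q r"
      using incomp_imp_incomp_gadget[OF rp cd x J(2)] pat unfolding low_pattern_def by blast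
    moreover obtain p' q' r' where "incomp_gadget (Cycl le) c d y z p' q' r'"
      using incomp_imp_incomp_gadget[OF rp cd y z] pat unfolding low_pattern_def by blast
    moreover have "Cycl le c x u" "Cycl le c y w" "Cycl le c z u" "Cycl le c v w"
      using pat lt_iff x y z J unfolding low_pattern_def by blast+
    ultimately show "\<exists>u v w p q r p' q' r'.
      \<forall>a\<in>set low_atoms. holds_atom (Cycl le) c d [x, y, z, u, v, w, p, q, r, p', q', r'] a"
      using pat x y z J unfolding holds_low_atoms low_pattern_def J_iff by blast
  next
    assume "\<exists>u v w p q r p' q' r'.
      \<forall>a\<in>set low_atoms. holds_atom (Cycl le) c d [x, y, z, u, v, w, p, q, r, p', q', r'] a"
    then obtain u v w p q r p' q' r' where
      J: "u \<in> open_interval le c d" "v \<in> open_interval le c d" "w \<in> open_interval le c d" and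
      C: "Cycl le x y w" "Cycl le x z v" "Cycl le x u w" "Cycl le z u w" "Cycl le z v w" and
      L: "Cycl le c x u" "Cycl le c y w" "Cycl le c z u" "Cycl le c v w" and
      G: "incomp_gadget (Cycl le) c d x v p q r" "incomp_gadget (Cycl le) c d y z p' q' r'"
      unfolding holds_low_atoms J_iff by blast
    have "low_pattern le x y z u v w"
      unfolding low_pattern_def
      using C L[unfolded lt_iff[OF x J(1)] lt_iff[OF y J(3)] lt_iff[OF z J(1)] lt_iff[OF J(2,3)]]
        incomp_gadget_imp_incomp[OF po x J(2) G(1)] incomp_gadget_imp_incomp[OF po y z G(2)]
      by blast
    then show "Low le x y z" using low_pattern_imp_Low[OF po] by blast
  qed
qed

lemma ex_length_Suc_conv:
  "(\<exists>ys. length ys = Suc n \<and> P ys) \<longleftrightarrow> (\<exists>y ys. length ys = n \<and> P (y # ys))"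
  by (auto simp: length_Suc_conv)

lemma pp_definable_Low_open_interval:
  assumes rp: "random_po le" and cd: "lt le c d"
  shows "pp_definable (Cycl le) c d 3
    {[x, y, z] | x y z. x \<in> open_interval le c d \<and> y \<in> open_interval le c d \<and> z \<in> open_interval le c d
       \<and> Low le x y z}"
  unfolding pp_definable_def
proof (intro conjI exI[of _ 9] exI[of _ low_atoms] allI impI)
  show "\<forall>a\<in>set low_atoms. \<forall>i\<in>atom_vars a. i < 3 + 9"
    by (simp add: low_atoms_def incomp_gadget_atoms_def)
  fix xs :: "'a list" assume "length xs = 3"
  then obtain x y z where xs: "xs = [x, y, z]" by (auto simp: length_Suc_conv numeral_eq_Suc)
  have po: "is_po le" using random_po_is_po[OF rp] .
  let ?J = "open_interval le c d"
  let ?low = "\<lambda>u v w p q r p' q' r'.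
    \<forall>a\<in>set low_atoms. holds_atom (Cycl le) c d [x, y, z, u, v, w, p, q, r, p', q', r'] a"
  have "(\<exists>ys. length ys = 9 \<and> (\<forall>a\<in>set low_atoms. holds_atom (Cycl le) c d (xs @ ys) a))
    \<longleftrightarrow> (\<exists>u v w p q r p' q' r'. ?low u v w p q r p' q' r')"
    unfolding xs by (simp add: numeral_eq_Suc ex_length_Suc_conv)
  also have "\<dots> \<longleftrightarrow> x \<in> ?J \<and> y \<in> ?J \<and> z \<in> ?J \<and> Low le x y z"
  proof (cases "x \<in> ?J \<and> y \<in> ?J \<and> z \<in> ?J")
    case True
    then show ?thesis using Low_iff_holds_low_atoms[OF rp cd] by blast
  next
    case False
    then show ?thesis unfolding holds_low_atoms Cycl_open_interval_iff[OF po cd] by blast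
  qed
  finally show "xs \<in> {[x, y, z] | x y z. x \<in> ?J \<and> y \<in> ?J \<and> z \<in> ?J \<and> Low le x y z}
    \<longleftrightarrow> (\<exists>ys. length ys = 9 \<and> (\<forall>a\<in>set low_atoms. holds_atom (Cycl le) c d (xs @ ys) a))"
    unfolding xs by blast
qed auto

lemma pp_definable_open_interval:
  assumes po: "is_po le" and cd: "lt le c d"
  shows "pp_definable (Cycl le) c d 1 {[x] | x. x \<in> open_interval le c d}"
  unfolding pp_definable_def
proof (intro conjI exI[of _ 0] exI[of _ "[AR CstD CstC (Var 0)]"] allI impI)
  fix xs :: "'a list" assume "length xs = 1"
  then obtain x where "xs = [x]" by (auto simp: length_Suc_conv)
  then show "xs \<in> {[x] | x. x \<in> open_interval le c d} \<longleftrightarrow>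
    (\<exists>ys. length ys = 0 \<and> (\<forall>a\<in>set [AR CstD CstC (Var 0)]. holds_atom (Cycl le) c d (xs @ ys) a))"
    by (simp add: Cycl_open_interval_iff[OF po cd])
qed auto

lemma pp_definable_open_interval_diagonal:
  assumes po: "is_po le" and cd: "lt le c d"
  shows "pp_definable (Cycl le) c d 2 {[x, x] | x. x \<in> open_interval le c d}"
  unfolding pp_definable_def
proof (intro conjI exI[of _ 0] exI[of _ "[AR CstD CstC (Var 0), AEq (Var 0) (Var 1)]"] allI impI)
  fix xs :: "'a list" assume "length xs = 2"
  then obtain x y where "xs = [x, y]" by (auto simp: length_Suc_conv numeral_eq_Suc)
  then show "xs \<in> {[x, x] | x. x \<in> open_interval le c d} \<longleftrightarrow>
    (\<exists>ys. length ys = 0 \<and> (\<forall>a\<in>set [AR CstD CstC (Var 0), AEq (Var 0) (Var 1)].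
       holds_atom (Cycl le) c d (xs @ ys) a))"
    by (auto simp: Cycl_open_interval_iff[OF po cd])
qed auto

lemma pp_interpretable_by_unary_domain:
  assumes dom: "pp_definable R c d 1 {[x] | x. x \<in> J}"
    and eq: "pp_definable R c d 2 {[x, x] | x. x \<in> J}"
    and rel: "pp_definable R c d 3 {[x, y, z] | x y z. x \<in> J \<and> y \<in> J \<and> z \<in> J \<and> S (h x) (h y) (h z)}"
    and inj: "inj_on h J" and surj: "h ` J = UNIV"
  shows "pp_interpretable R c d S"
proof -
  define I where "I xs = (case xs of [x] \<Rightarrow> if x \<in> J then Some (h x) else None | _ \<Rightarrow> None)" for xs
  have I_None: "I xs \<noteq> None \<longleftrightarrow> (\<exists>x. xs = [x] \<and> x \<in> J)" for xs
    unfolding I_def by (cases xs rule: remdups_adj.cases) auto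
  have I: "x \<in> J \<Longrightarrow> I [x] = Some (h x)" for x by (simp add: I_def)
  define Dom where "Dom = {xs. length xs = 1 \<and> I xs \<noteq> None}"
  have Dom: "Dom = {[x] | x. x \<in> J}" unfolding Dom_def I_None by auto
  have "\<exists>xs\<in>Dom. I xs = Some b" for b
  proof -
    obtain x where "x \<in> J" "b = h x" using surj by (metis UNIV_I imageE)
    then show ?thesis using I unfolding Dom by blast
  qed
  moreover have "{xs @ ys | xs ys. xs \<in> Dom \<and> ys \<in> Dom \<and> I xs = I ys} = {[x, x] | x. x \<in> J}"
  proof (intro set_eqI iffI)
    fix l assume "l \<in> {[x, x] | x. x \<in> J}"
    then obtain x where "l = [x] @ [x]" "x \<in> J" by auto
    then show "l \<in> {xs @ ys | xs ys. xs \<in> Dom \<and> ys \<in> Dom \<and> I xs = I ys}" unfolding Dom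
      by (intro CollectI exI[of _ "[x]"]) auto
  qed (use I inj in \<open>auto simp: Dom inj_on_eq_iff\<close>)
  moreover have "{xs @ ys @ zs | xs ys zs. xs \<in> Dom \<and> ys \<in> Dom \<and> zs \<in> Dom \<and>
      S (the (I xs)) (the (I ys)) (the (I zs))}
    = {[x, y, z] | x y z. x \<in> J \<and> y \<in> J \<and> z \<in> J \<and> S (h x) (h y) (h z)}"
  proof (intro set_eqI iffI)
    fix l assume "l \<in> {[x, y, z] | x y z. x \<in> J \<and> y \<in> J \<and> z \<in> J \<and> S (h x) (h y) (h z)}"
    then obtain x y z where "l = [x] @ [y] @ [z]" "x \<in> J" "y \<in> J" "z \<in> J" "S (h x) (h y) (h z)"
      by auto
    then show "l \<in> {xs @ ys @ zs | xs ys zs. xs \<in> Dom \<and> ys \<in> Dom \<and> zs \<in> Dom \<and>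
      S (the (I xs)) (the (I ys)) (the (I zs))}" using I unfolding Dom
      by (intro CollectI exI[of _ "[x]"] exI[of _ "[y]"] exI[of _ "[z]"]) auto
  qed (use I in \<open>auto simp: Dom\<close>)
  ultimately have "(\<forall>b. \<exists>xs\<in>Dom. I xs = Some b) \<and> pp_definable R c d 1 Dom
    \<and> pp_definable R c d (2 * 1) {xs @ ys | xs ys. xs \<in> Dom \<and> ys \<in> Dom \<and> I xs = I ys}
    \<and> pp_definable R c d (3 * 1) {xs @ ys @ zs | xs ys zs. xs \<in> Dom \<and> ys \<in> Dom \<and> zs \<in> Dom
        \<and> S (the (I xs)) (the (I ys)) (the (I zs))}"
    using dom eq rel Dom by simp
  then show ?thesis
    unfolding pp_interpretable_def Let_def Dom_def by (intro exI[of _ 1] exI[of _ I]) simp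
qed

lemma order_embedding_eq_iff:
  assumes po: "is_po le" and h: "\<forall>x\<in>J. \<forall>y\<in>J. le x y \<longleftrightarrow> le (h x) (h y)"
    and "x \<in> J" "y \<in> J"
  shows "h x = h y \<longleftrightarrow> x = y"
  using assms is_po_refl[OF po] is_po_antisym[OF po] by metis

lemma Low_order_embedding:
  assumes po: "is_po le" and h: "\<forall>x\<in>J. \<forall>y\<in>J. le x y \<longleftrightarrow> le (h x) (h y)"
    and "x \<in> J" "y \<in> J" "z \<in> J"
  shows "Low le (h x) (h y) (h z) \<longleftrightarrow> Low le x y z"
  using assms order_embedding_eq_iff[OF po h] unfolding Low_def lt_def incomp_def by simp

theorem lemma62:
  fixes le :: "'a \<Rightarrow> 'a \<Rightarrow> bool" and c d :: 'a
  assumes "random_po le"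
    and "lt le c d"
  shows "pp_interpretable (Cycl le) c d (Low le)"
proof -
  let ?J = "open_interval le c d"
  have po: "is_po le" using random_po_is_po[OF assms(1)] .
  obtain h where h: "\<forall>x\<in>?J. \<forall>y\<in>?J. le x y \<longleftrightarrow> le (h x) (h y)" and surj: "h ` ?J = UNIV"
    using random_po_open_interval_iso[OF assms] by blast
  have "inj_on h ?J" using order_embedding_eq_iff[OF po h] by (auto intro: inj_onI)
  moreover have "{[x, y, z] | x y z. x \<in> ?J \<and> y \<in> ?J \<and> z \<in> ?J \<and> Low le (h x) (h y) (h z)}
    = {[x, y, z] | x y z. x \<in> ?J \<and> y \<in> ?J \<and> z \<in> ?J \<and> Low le x y z}"
    using Low_order_embedding[OF po h] by blast
  ultimately show ?thesis
    using pp_interpretable_by_unary_domain[OF pp_definable_open_interval[OF po assms(2)]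
        pp_definable_open_interval_diagonal[OF po assms(2)] _ _ surj]
      pp_definable_Low_open_interval[OF assms] by simp
qed

end
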